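(* Let $\Omega\subset\mathbb{R}^N$ ($N\ge2$) be a bounded smooth domain, $1<q<2<p$, $a,b\in C^\alpha(\overline\Omega)$, and assume there exists a ball $B$ with $\overline B\subset\Omega$ such that $a\ge0$, $a\not\equiv0$ and $b>0$ on $\overline B$. Then there exist constants $\overline\lambda>0$ and $\epsilon_0>0$ such that for every $\lambda\ge\overline\lambda$ and $\epsilon\in(0,\epsilon_0]$ the problem $-\Delta u=\lambda(b(x)-\epsilon)|u+\epsilon|^{q-2}u+a(x)|u|^{p-2}u$ in $\Omega$, $\frac{\partial u}{\partial\mathbf{n}}=0$ on $\partial\Omega$, has no nontrivial non-negative solution.
   Context: Nontrivial non-negative: $u\ge0$ on $\overline\Omega$, $u\not\equiv0$; solutions are classical. *)

theory Defs
  imports "HOL-Analysis.Analysis"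
begin

definition partial_deriv :: "'a::euclidean_space \<Rightarrow> ('a \<Rightarrow> real) \<Rightarrow> 'a \<Rightarrow> real" where
  "partial_deriv i f x = deriv (\<lambda>t. f (x + t *\<^sub>R i)) 0"

text \<open>C-infinity on the whole space: all iterated partial derivatives (along basis
  directions) exist everywhere and are continuous.\<close>
definition smooth_fun :: "('a::euclidean_space \<Rightarrow> real) \<Rightarrow> bool" where
  "smooth_fun f \<longleftrightarrow>
     (\<forall>is. set is \<subseteq> Basis \<longrightarrow>
        continuous_on UNIV (foldr partial_deriv is f) \<and>
        (\<forall>i\<in>Basis. \<forall>x. (\<lambda>t. foldr partial_deriv is f (x + t *\<^sub>R i)) field_differentiable (at 0)))"

definition grad :: "('a::euclidean_space \<Rightarrow> real) \<Rightarrow> 'a \<Rightarrow> 'a" where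
  "grad f x = (\<Sum>i\<in>Basis. partial_deriv i f x *\<^sub>R i)"

text \<open>A smooth defining function of a domain: Omega = {phi < 0}, grad phi nonzero on {phi = 0}.
  The outward normal at a boundary point is grad phi / |grad phi|.\<close>
definition defining_function :: "'a::euclidean_space set \<Rightarrow> ('a \<Rightarrow> real) \<Rightarrow> bool" where
  "defining_function \<Omega> \<phi> \<longleftrightarrow> smooth_fun \<phi> \<and> \<Omega> = {x. \<phi> x < 0} \<and>
     (\<forall>x. \<phi> x = 0 \<longrightarrow> grad \<phi> x \<noteq> 0)"

definition bounded_smooth_domain :: "'a::euclidean_space set \<Rightarrow> bool" where
  "bounded_smooth_domain \<Omega> \<longleftrightarrow> open \<Omega> \<and> connected \<Omega> \<and> \<Omega> \<noteq> {} \<and> bounded \<Omega> \<and>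
     (\<exists>\<phi>. defining_function \<Omega> \<phi>)"

definition holder_continuous_on :: "real \<Rightarrow> 'a::metric_space set \<Rightarrow> ('a \<Rightarrow> real) \<Rightarrow> bool" where
  "holder_continuous_on \<alpha> S f \<longleftrightarrow> (\<exists>C. \<forall>x\<in>S. \<forall>y\<in>S. \<bar>f x - f y\<bar> \<le> C * dist x y powr \<alpha>)"

text \<open>Classical solution u in C^2(Omega) \<inter> C^1(closure Omega) of
  -Laplace u = F x (u x) in Omega, du/dn = 0 on the boundary.\<close>
definition neumann_classical_solution ::
  "'a::euclidean_space set \<Rightarrow> ('a \<Rightarrow> real \<Rightarrow> real) \<Rightarrow> ('a \<Rightarrow> real) \<Rightarrow> bool" where
  "neumann_classical_solution \<Omega> F u \<longleftrightarrow>
     (\<exists>Du :: 'a \<Rightarrow> 'a. \<exists>D2u :: 'a \<Rightarrow> 'a \<Rightarrow> 'a.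
        continuous_on (closure \<Omega>) u \<and>
        continuous_on (closure \<Omega>) Du \<and>
        (\<forall>x\<in>\<Omega>. (u has_derivative (\<lambda>h. Du x \<bullet> h)) (at x)) \<and>
        (\<forall>x\<in>\<Omega>. (Du has_derivative D2u x) (at x)) \<and>
        (\<forall>i\<in>Basis. \<forall>j\<in>Basis. continuous_on \<Omega> (\<lambda>x. D2u x i \<bullet> j)) \<and>
        (\<forall>x\<in>\<Omega>. - (\<Sum>i\<in>Basis. D2u x i \<bullet> i) = F x (u x)) \<and>
        (\<forall>\<phi>. defining_function \<Omega> \<phi> \<longrightarrow> (\<forall>x\<in>frontier \<Omega>. Du x \<bullet> grad \<phi> x = 0)))"

end

theory Submission
  imports Defs
begin

text \<open>
  A nontrivial non-negative solution satisfies -\<Delta>u \<ge> -C u for some constant C, so by the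
  strong maximum principle (proved with Hopf's Gaussian barrier) it is positive in \<Omega>.
  On a small ball B(c,\<rho>) around a point where a, b > 0, the right-hand side dominates \<Lambda> u,
  \<Lambda> = 8 N^2 / \<rho>^2, once \<lambda> is large and \<epsilon> small: the convex term a u^(p-1) does so where u
  is large, the concave term \<lambda> (b - \<epsilon>) (u + \<epsilon>)^(q-2) u where u is small. Touching u from
  below by a multiple of the bump exp(-\<alpha> |x-c|^2) - exp(-\<alpha> \<rho>^2) with \<alpha> = N / \<rho>^2 shows that
  no positive function satisfies -\<Delta>u \<ge> \<Lambda> u on that ball.
\<close>

abbreviation trace_op :: "('a::euclidean_space \<Rightarrow> 'a) \<Rightarrow> real" where
  "trace_op D \<equiv> \<Sum>i\<in>Basis. D i \<bullet> i"

section \<open>Second-order conditions at minima\<close>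

lemma has_real_derivative_along_line:
  fixes f :: "'a::real_normed_vector \<Rightarrow> real"
  assumes "(f has_derivative f') (at (x + t *\<^sub>R v))"
  shows "((\<lambda>s. f (x + s *\<^sub>R v)) has_real_derivative f' v) (at t)"
proof -
  have "((\<lambda>s. x + s *\<^sub>R v) has_derivative (\<lambda>s. s *\<^sub>R v)) (at t)"
    by (auto intro!: derivative_eq_intros)
  from has_derivative_compose[OF this assms]
  have "((\<lambda>s. f (x + s *\<^sub>R v)) has_derivative (\<lambda>s. f' (s *\<^sub>R v))) (at t)" .
  moreover have "f' (s *\<^sub>R v) = f' v * s" for s
    using linear_cmul[OF has_derivative_linear[OF assms]] by simp
  ultimately show ?thesis
    by (simp add: has_field_derivative_def)
qed

lemma second_derivative_nonneg_at_local_min: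
  fixes g k :: "real \<Rightarrow> real"
  assumes e: "0 < e"
    and dg: "\<And>t. \<bar>t\<bar> < e \<Longrightarrow> (g has_real_derivative k t) (at t)"
    and min: "\<And>t. \<bar>t\<bar> < e \<Longrightarrow> g 0 \<le> g t"
    and dk: "(k has_real_derivative c) (at 0)"
  shows "0 \<le> c"
proof (rule ccontr)
  assume "\<not> 0 \<le> c"
  have k0: "k 0 = 0"
    using DERIV_local_min[OF dg[of 0] e] min e by auto
  obtain d where d: "d > 0" "\<And>h. h > 0 \<Longrightarrow> h < d \<Longrightarrow> k (0 + h) < k 0"
    using DERIV_neg_dec_right[OF dk] \<open>\<not> 0 \<le> c\<close> by force
  define t where "t = min d e / 2"
  have t: "0 < t" "t < d" "t < e" using d e by (auto simp: t_def)
  obtain z where z: "0 < z" "z < t" "g t - g 0 = (t - 0) * k z"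
    using MVT2[of 0 t g k] t dg by force
  have "k z < 0" using d(2)[of z] z t k0 by simp
  hence "g t < g 0" using z mult_pos_neg[of t "k z"] t by simp
  with min[of t] t show False by simp
qed

lemma derivative_nonneg_at_right_min:
  fixes g :: "real \<Rightarrow> real"
  assumes deriv: "(g has_real_derivative L) (at 0)" and T: "0 < T"
    and min: "\<And>t. 0 < t \<Longrightarrow> t \<le> T \<Longrightarrow> g 0 \<le> g t"
  shows "0 \<le> L"
proof (rule ccontr)
  assume "\<not> 0 \<le> L"
  then obtain \<delta> where \<delta>: "0 < \<delta>" "\<And>h. 0 < h \<Longrightarrow> h < \<delta> \<Longrightarrow> g (0 + h) < g 0"
    using DERIV_neg_dec_right[OF deriv] by force
  define t where "t = min \<delta> T / 2"
  have "0 < t" "t < \<delta>" "t \<le> T" using \<delta>(1) T by (auto simp: t_def)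
  with \<delta>(2) min show False by force
qed

lemma trace_nonneg_at_local_min:
  fixes w :: "'a::euclidean_space \<Rightarrow> real"
  assumes S: "open S" "x \<in> S"
    and min: "\<And>y. y \<in> S \<Longrightarrow> w x \<le> w y"
    and dw: "\<And>y. y \<in> S \<Longrightarrow> (w has_derivative (\<lambda>h. Dw y \<bullet> h)) (at y)"
    and d2w: "(Dw has_derivative D2) (at x)"
  shows "0 \<le> trace_op D2"
proof (rule sum_nonneg)
  fix i :: 'a assume i: "i \<in> Basis"
  obtain e where e: "e > 0" "ball x e \<subseteq> S" using S open_contains_ball by blast
  have inS: "x + t *\<^sub>R i \<in> S" if "\<bar>t\<bar> < e" for t
    using e(2) that i by (auto simp: dist_norm)
  have "((\<lambda>y. Dw y \<bullet> i) has_derivative (\<lambda>h. D2 h \<bullet> i)) (at (x + 0 *\<^sub>R i))"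
    using has_derivative_inner_left[OF d2w] by simp
  then show "0 \<le> D2 i \<bullet> i"
    by (intro second_derivative_nonneg_at_local_min[OF e(1), of "\<lambda>t. w (x + t *\<^sub>R i)" "\<lambda>t. Dw (x + t *\<^sub>R i) \<bullet> i"]
          has_real_derivative_along_line dw inS)
       (use min inS in auto)
qed

lemma weak_minimum_principle:
  fixes w :: "'a::euclidean_space \<Rightarrow> real"
  assumes K: "compact K" "open A" "A \<subseteq> K" "continuous_on K w"
    and bdry: "\<forall>x\<in>K - A. 0 \<le> w x"
    and dw: "\<forall>x\<in>A. (w has_derivative (\<lambda>h. Dw x \<bullet> h)) (at x)"
    and d2w: "\<forall>x\<in>A. (Dw has_derivative D2w x) (at x)"
    and strict: "\<forall>x\<in>A. w x < 0 \<longrightarrow> trace_op (D2w x) < 0"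
  shows "\<forall>x\<in>K. 0 \<le> w x"
proof (rule ccontr)
  assume "\<not> (\<forall>x\<in>K. 0 \<le> w x)"
  then obtain x0 where x0: "x0 \<in> K" "w x0 < 0" by auto
  obtain x where x: "x \<in> K" "\<And>y. y \<in> K \<Longrightarrow> w x \<le> w y"
    using continuous_attains_inf[OF K(1) _ K(4)] x0(1) by blast
  have "w x < 0" using x(2)[OF x0(1)] x0(2) by simp
  with bdry x(1) have "x \<in> A" by force
  have "0 \<le> trace_op (D2w x)"
    by (rule trace_nonneg_at_local_min[OF K(2) \<open>x \<in> A\<close>, of w Dw]) (use x K(3) dw d2w \<open>x \<in> A\<close> in auto)
  with strict \<open>x \<in> A\<close> \<open>w x < 0\<close> show False by auto
qed

section \<open>The Gaussian barrier\<close>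

definition gauss :: "real \<Rightarrow> 'a::euclidean_space \<Rightarrow> 'a \<Rightarrow> real" where
  "gauss \<alpha> z x = exp (- \<alpha> * ((x - z) \<bullet> (x - z)))"

definition gauss_grad :: "real \<Rightarrow> 'a::euclidean_space \<Rightarrow> 'a \<Rightarrow> 'a" where
  "gauss_grad \<alpha> z x = (- 2 * \<alpha> * gauss \<alpha> z x) *\<^sub>R (x - z)"

definition gauss_hess :: "real \<Rightarrow> 'a::euclidean_space \<Rightarrow> 'a \<Rightarrow> 'a \<Rightarrow> 'a" where
  "gauss_hess \<alpha> z x h =
     (- 2 * \<alpha> * gauss \<alpha> z x) *\<^sub>R h + (4 * \<alpha>\<^sup>2 * gauss \<alpha> z x * ((x - z) \<bullet> h)) *\<^sub>R (x - z)"

lemma gauss_pos: "0 < gauss \<alpha> z x"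
  by (simp add: gauss_def)

lemma gauss_eq_exp_dist: "gauss \<alpha> z x = exp (- \<alpha> * (dist z x)\<^sup>2)"
  by (simp add: gauss_def dist_norm power2_norm_eq_inner[symmetric] norm_minus_commute)

lemma gauss_le_one: "0 \<le> \<alpha> \<Longrightarrow> gauss \<alpha> z x \<le> 1"
  by (simp add: gauss_eq_exp_dist)

lemma continuous_on_gauss: "continuous_on S (gauss \<alpha> z)"
  unfolding gauss_def[abs_def] by (intro continuous_intros)

lemma has_derivative_gauss: "(gauss \<alpha> z has_derivative (\<lambda>h. gauss_grad \<alpha> z x \<bullet> h)) (at x)"
  unfolding gauss_def[abs_def] gauss_grad_def
  by (auto intro!: derivative_eq_intros simp: fun_eq_iff gauss_def inner_commute algebra_simps)

lemma has_derivative_gauss_grad: "(gauss_grad \<alpha> z has_derivative gauss_hess \<alpha> z x) (at x)"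
proof -
  have "((\<lambda>x. (- 2 * \<alpha> * gauss \<alpha> z x) *\<^sub>R (x - z)) has_derivative
     (\<lambda>h. (- 2 * \<alpha> * gauss \<alpha> z x) *\<^sub>R (h - 0) + (- 2 * \<alpha> * (gauss_grad \<alpha> z x \<bullet> h)) *\<^sub>R (x - z))) (at x)"
    by (intro has_derivative_scaleR has_derivative_mult_right has_derivative_gauss
          has_derivative_diff has_derivative_ident has_derivative_const)
  then show ?thesis unfolding gauss_grad_def[abs_def] gauss_hess_def[abs_def]
    by (rule has_derivative_eq_rhs) (auto simp: fun_eq_iff gauss_grad_def power2_eq_square algebra_simps)
qed

lemma trace_gauss_hess:
  "trace_op (gauss_hess \<alpha> z x) =
     gauss \<alpha> z (x::'a::euclidean_space) * (4 * \<alpha>\<^sup>2 * (dist z x)\<^sup>2 - 2 * \<alpha> * DIM('a))"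
proof -
  have "trace_op (gauss_hess \<alpha> z x) =
     (\<Sum>i\<in>Basis. - 2 * \<alpha> * gauss \<alpha> z x + 4 * \<alpha>\<^sup>2 * gauss \<alpha> z x * (((x - z) \<bullet> i) * ((x - z) \<bullet> i)))"
    by (rule sum.cong) (auto simp: gauss_hess_def inner_add_left algebra_simps)
  also have "\<dots> = DIM('a) * (- 2 * \<alpha> * gauss \<alpha> z x) + 4 * \<alpha>\<^sup>2 * gauss \<alpha> z x * ((x - z) \<bullet> (x - z))"
    by (simp add: sum.distrib sum_subtractf sum_distrib_left[symmetric] euclidean_inner[of "x - z" "x - z"])
  finally show ?thesis
    by (simp add: algebra_simps dist_norm power2_norm_eq_inner norm_minus_commute)
qed

lemma has_derivative_minus_gauss_multiple:
  fixes u :: "'a::euclidean_space \<Rightarrow> real"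
  assumes "(u has_derivative (\<lambda>h. Du \<bullet> h)) (at x)"
  shows "((\<lambda>y. u y - m * (gauss \<alpha> z y - c)) has_derivative
           (\<lambda>h. (Du - m *\<^sub>R gauss_grad \<alpha> z x) \<bullet> h)) (at x)"
proof -
  have "((\<lambda>y. u y - m * (gauss \<alpha> z y - c)) has_derivative
          (\<lambda>h. Du \<bullet> h - m * (gauss_grad \<alpha> z x \<bullet> h - 0))) (at x)"
    by (intro has_derivative_diff has_derivative_mult_right has_derivative_gauss
          has_derivative_const assms)
  then show ?thesis by (rule has_derivative_eq_rhs) (auto simp: fun_eq_iff inner_diff_left)
qed

lemma has_derivative_minus_gauss_grad_multiple:
  assumes "(Du has_derivative D2u) (at x)"
  shows "((\<lambda>y. Du y - m *\<^sub>R gauss_grad \<alpha> z y) has_derivative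
           (\<lambda>h. D2u h - m *\<^sub>R gauss_hess \<alpha> z x h)) (at x)"
  by (intro has_derivative_diff has_derivative_scaleR_right has_derivative_gauss_grad assms)

lemma exists_gauss_rate:
  fixes C d N :: real
  assumes "0 \<le> C" "0 < d" "0 \<le> N"
  obtains \<alpha> where "1 \<le> \<alpha>" "2 * \<alpha> * N + C < \<alpha>\<^sup>2 * d\<^sup>2"
proof
  define \<alpha> where "\<alpha> = (2 * N + C + 1) / d\<^sup>2 + 1"
  show "1 \<le> \<alpha>" using assms by (simp add: \<alpha>_def)
  have "\<alpha> * (2 * N + C + 1) \<le> \<alpha> * (\<alpha> * d\<^sup>2)"
    using \<open>1 \<le> \<alpha>\<close> assms by (intro mult_left_mono) (auto simp: \<alpha>_def field_simps)
  moreover have "C \<le> \<alpha> * C" using \<open>1 \<le> \<alpha>\<close> assms(1) by (simp add: mult_le_cancel_right1)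
  ultimately show "2 * \<alpha> * N + C < \<alpha>\<^sup>2 * d\<^sup>2"
    using \<open>1 \<le> \<alpha>\<close> by (simp add: power2_eq_square algebra_simps)
qed

lemma trace_gauss_hess_gt:
  fixes z x :: "'a::euclidean_space" and C \<alpha> d :: real
  assumes "0 \<le> C" "2 * \<alpha> * DIM('a) + C < \<alpha>\<^sup>2 * d\<^sup>2" "d\<^sup>2 \<le> 4 * (dist z x)\<^sup>2"
  shows "C * gauss \<alpha> z x < trace_op (gauss_hess \<alpha> z x)"
proof -
  have "\<alpha>\<^sup>2 * d\<^sup>2 \<le> 4 * \<alpha>\<^sup>2 * (dist z x)\<^sup>2"
    using mult_left_mono[OF assms(3), of "\<alpha>\<^sup>2"] by simp
  with assms(2) have "C < 4 * \<alpha>\<^sup>2 * (dist z x)\<^sup>2 - 2 * \<alpha> * DIM('a)" by linarith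
  then show ?thesis
    unfolding trace_gauss_hess by (metis gauss_pos mult.commute mult_strict_left_mono)
qed

lemma trace_sub_gauss_hess_neg:
  fixes z x :: "'a::euclidean_space" and C d \<alpha> m s :: real
  assumes C: "0 \<le> C" and m: "0 < m" and \<alpha>: "2 * \<alpha> * DIM('a) + C < \<alpha>\<^sup>2 * d\<^sup>2"
    and far: "d\<^sup>2 \<le> 4 * (dist z x)\<^sup>2" and below: "s < m * gauss \<alpha> z x"
    and sub: "trace_op D2 \<le> C * s"
  shows "trace_op (\<lambda>h. D2 h - m *\<^sub>R gauss_hess \<alpha> z x h) < 0"
proof -
  have "C * s \<le> C * (m * gauss \<alpha> z x)" using C below by (simp add: mult_left_mono)
  with sub have "trace_op D2 \<le> m * (C * gauss \<alpha> z x)" by (simp add: algebra_simps)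
  also have "\<dots> < m * trace_op (gauss_hess \<alpha> z x)"
    using trace_gauss_hess_gt[OF C \<alpha> far] m by simp
  finally show ?thesis by (simp add: inner_diff_left sum_subtractf sum_distrib_left)
qed

lemma gauss_bump_strict_supersolution:
  fixes z x :: "'a::euclidean_space" and \<alpha> \<rho> \<Lambda> :: real
  assumes \<alpha>: "\<alpha> * \<rho>\<^sup>2 = DIM('a)" and \<Lambda>: "8 * \<alpha> * DIM('a) \<le> \<Lambda>"
    and above: "exp (- \<alpha> * \<rho>\<^sup>2) < gauss \<alpha> z x"
  shows "- trace_op (gauss_hess \<alpha> z x) < \<Lambda> * (gauss \<alpha> z x - exp (- \<alpha> * \<rho>\<^sup>2))"
proof (rule ccontr)
  define N where "N = real DIM('a)"
  define G where "G = gauss \<alpha> z x"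
  define c0 where "c0 = exp (- \<alpha> * \<rho>\<^sup>2)"
  define r2 where "r2 = (dist z x)\<^sup>2"
  have N: "1 \<le> N" using DIM_positive[where 'a='a] unfolding N_def by linarith
  have "0 < \<alpha> * \<rho>\<^sup>2" using \<alpha> N by (simp add: N_def)
  then have "0 < \<alpha>"
    using zero_le_power2[of \<rho>] by (auto simp: zero_less_mult_iff)
  have G: "0 < G" by (simp add: G_def gauss_pos)
  assume "\<not> ?thesis"
  then have ineq: "\<Lambda> * (G - c0) \<le> G * (2 * \<alpha> * N - 4 * \<alpha>\<^sup>2 * r2)"
    by (simp add: trace_gauss_hess G_def c0_def r2_def N_def algebra_simps)
  have pos: "0 < G - c0" using above by (simp add: G_def c0_def)
  have lower: "8 * \<alpha> * N * (G - c0) \<le> \<Lambda> * (G - c0)"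
    using \<Lambda> pos by (simp add: N_def mult_right_mono)
  moreover have "G * (2 * \<alpha> * N - 4 * \<alpha>\<^sup>2 * r2) \<le> G * (2 * \<alpha> * N)"
    using G \<open>0 < \<alpha>\<close> by (simp add: mult_left_mono r2_def)
  ultimately have "(2 * \<alpha> * N) * (4 * (G - c0)) \<le> (2 * \<alpha> * N) * G"
    using ineq by (simp add: algebra_simps)
  then have G_small: "3 * G \<le> 4 * c0"
    using \<open>0 < \<alpha>\<close> N by (simp add: mult_le_cancel_left_pos)
  have "0 < G * (2 * \<alpha> * N - 4 * \<alpha>\<^sup>2 * r2)"
    using lower ineq pos \<open>0 < \<alpha>\<close> N by (smt (verit) mult_pos_pos)
  then have "\<alpha> * (2 * (\<alpha> * r2)) < \<alpha> * N"
    using G by (simp add: zero_less_mult_iff power2_eq_square algebra_simps)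
  then have "2 * (\<alpha> * r2) < N" using \<open>0 < \<alpha>\<close> by simp
  then have "1 / 2 < \<alpha> * \<rho>\<^sup>2 - \<alpha> * r2"
    using \<alpha> N unfolding N_def by linarith
  then have "3 / 2 \<le> exp (\<alpha> * \<rho>\<^sup>2 - \<alpha> * r2)"
    using exp_ge_add_one_self[of "\<alpha> * \<rho>\<^sup>2 - \<alpha> * r2"] by linarith
  moreover have "G = c0 * exp (\<alpha> * \<rho>\<^sup>2 - \<alpha> * r2)"
    by (simp add: G_def c0_def r2_def gauss_eq_exp_dist exp_add[symmetric])
  moreover have "0 < c0" by (simp add: c0_def)
  ultimately have "c0 * (3 / 2) \<le> G"
    by (metis less_eq_real_def mult_left_mono)
  with G_small \<open>0 < c0\<close> show False by linarith
qed

section \<open>Maximum principles\<close>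

lemma hopf_barrier_comparison:
  fixes u :: "'a::euclidean_space \<Rightarrow> real" and C d \<alpha> m :: real
  assumes cont: "continuous_on U u" and nn: "\<forall>x\<in>U. 0 \<le> u x"
    and C: "0 \<le> C"
    and du: "\<forall>x\<in>U. (u has_derivative (\<lambda>h. Du x \<bullet> h)) (at x)"
    and d2u: "\<forall>x\<in>U. (Du has_derivative D2u x) (at x)"
    and pde: "\<forall>x\<in>U. - C * u x \<le> - trace_op (D2u x)"
    and d: "0 < d" "cball x1 d \<subseteq> U"
    and \<alpha>: "0 \<le> \<alpha>" "2 * \<alpha> * DIM('a) + C < \<alpha>\<^sup>2 * d\<^sup>2"
    and m: "0 < m" "\<forall>y\<in>sphere x1 (d / 2). m \<le> u y"
  shows "\<forall>x\<in>cball x1 d - ball x1 (d / 2). m * (gauss \<alpha> x1 x - exp (- \<alpha> * d\<^sup>2)) \<le> u x"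
proof -
  define K where "K = cball x1 d - ball x1 (d / 2)"
  define A where "A = ball x1 d - cball x1 (d / 2)"
  define w where "w x = u x - m * (gauss \<alpha> x1 x - exp (- \<alpha> * d\<^sup>2))" for x
  have "A \<subseteq> K" "K \<subseteq> U" using d by (auto simp: A_def K_def)
  have "\<forall>x\<in>K. 0 \<le> w x"
  proof (rule weak_minimum_principle)
    show "compact K" "open A" "A \<subseteq> K" using \<open>A \<subseteq> K\<close> by (auto simp: K_def A_def intro!: compact_diff)
    show "continuous_on K w"
      unfolding w_def using continuous_on_subset[OF cont \<open>K \<subseteq> U\<close>]
      by (intro continuous_intros continuous_on_gauss)
    show "\<forall>x\<in>K - A. 0 \<le> w x"
    proof
      fix x assume x: "x \<in> K - A"
      then have "x \<in> U" using \<open>K \<subseteq> U\<close> by auto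
      consider "dist x1 x = d" | "dist x1 x = d / 2" using x by (auto simp: K_def A_def)
      then show "0 \<le> w x"
      proof cases
        case 1
        then show ?thesis using nn \<open>x \<in> U\<close> by (simp add: w_def gauss_eq_exp_dist)
      next
        case 2
        then have "m \<le> u x" using m by simp
        moreover have "m * gauss \<alpha> x1 x \<le> m" using gauss_le_one[OF \<alpha>(1)] m(1) by simp
        moreover have "0 \<le> m * exp (- \<alpha> * d\<^sup>2)" using m(1) by simp
        ultimately show ?thesis unfolding w_def right_diff_distrib by linarith
      qed
    qed
    show "\<forall>x\<in>A. (w has_derivative (\<lambda>h. (Du x - m *\<^sub>R gauss_grad \<alpha> x1 x) \<bullet> h)) (at x)"
      unfolding w_def[abs_def] using du \<open>A \<subseteq> K\<close> \<open>K \<subseteq> U\<close>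
      by (blast intro: has_derivative_minus_gauss_multiple)
    show "\<forall>x\<in>A. ((\<lambda>y. Du y - m *\<^sub>R gauss_grad \<alpha> x1 y) has_derivative
                   (\<lambda>h. D2u x h - m *\<^sub>R gauss_hess \<alpha> x1 x h)) (at x)"
      using d2u \<open>A \<subseteq> K\<close> \<open>K \<subseteq> U\<close> by (blast intro: has_derivative_minus_gauss_grad_multiple)
    show "\<forall>x\<in>A. w x < 0 \<longrightarrow> trace_op (\<lambda>h. D2u x h - m *\<^sub>R gauss_hess \<alpha> x1 x h) < 0"
    proof (intro ballI impI)
      fix x assume "x \<in> A" "w x < 0"
      then have "x \<in> U" using \<open>A \<subseteq> K\<close> \<open>K \<subseteq> U\<close> by auto
      have "0 \<le> m * exp (- \<alpha> * d\<^sup>2)" using m(1) by simp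
      with \<open>w x < 0\<close> have "u x < m * gauss \<alpha> x1 x"
        unfolding w_def right_diff_distrib by linarith
      moreover have "d / 2 \<le> dist x1 x" using \<open>x \<in> A\<close> by (simp add: A_def)
      then have "d\<^sup>2 \<le> 4 * (dist x1 x)\<^sup>2"
        using power_mono[of "d / 2" "dist x1 x" 2] d(1) by (simp add: power_divide)
      moreover have "trace_op (D2u x) \<le> C * u x" using pde \<open>x \<in> U\<close> by force
      ultimately show "trace_op (\<lambda>h. D2u x h - m *\<^sub>R gauss_hess \<alpha> x1 x h) < 0"
        using trace_sub_gauss_hess_neg[OF C m(1) \<alpha>(2)] by blast
    qed
  qed
  then show ?thesis by (simp add: K_def w_def)
qed

lemma hopf_lemma_ball:
  fixes u :: "'a::euclidean_space \<Rightarrow> real"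
  assumes U: "open U" and cont: "continuous_on U u" and nn: "\<forall>x\<in>U. 0 \<le> u x"
    and C: "0 \<le> C"
    and du: "\<forall>x\<in>U. (u has_derivative (\<lambda>h. Du x \<bullet> h)) (at x)"
    and d2u: "\<forall>x\<in>U. (Du has_derivative D2u x) (at x)"
    and pde: "\<forall>x\<in>U. - C * u x \<le> - trace_op (D2u x)"
    and d: "0 < d" "cball x1 d \<subseteq> U" "\<forall>y\<in>ball x1 d. 0 < u y"
    and y1: "dist x1 y1 = d"
  shows "0 < u y1"
proof (rule ccontr)
  assume "\<not> 0 < u y1"
  have "y1 \<in> U" using y1 d(2) by auto
  with nn \<open>\<not> 0 < u y1\<close> have u0: "u y1 = 0" by force
  have "0 \<le> real DIM('a)" by simp
  then obtain \<alpha> :: real where "1 \<le> \<alpha>" and \<alpha>: "2 * \<alpha> * DIM('a) + C < \<alpha>\<^sup>2 * d\<^sup>2"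
    by (rule exists_gauss_rate[OF C d(1)])
  obtain xm where xm: "xm \<in> sphere x1 (d / 2)" "\<And>y. y \<in> sphere x1 (d / 2) \<Longrightarrow> u xm \<le> u y"
    using continuous_attains_inf[of "sphere x1 (d / 2)" u] d
      continuous_on_subset[OF cont, of "sphere x1 (d / 2)"] by fastforce
  define m where "m = u xm"
  have "0 < m" using xm(1) d by (simp add: m_def)
  define w where "w x = u x - m * (gauss \<alpha> x1 x - exp (- \<alpha> * d\<^sup>2))" for x
  have w_nonneg: "\<forall>x\<in>cball x1 d - ball x1 (d / 2). 0 \<le> w x"
    using hopf_barrier_comparison[OF cont nn C du d2u pde d(1,2) _ \<alpha> \<open>0 < m\<close>] \<open>1 \<le> \<alpha>\<close> xm(2)
    by (simp add: w_def m_def)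
  have "eventually (\<lambda>y. u y1 \<le> u y) (at y1)"
    unfolding eventually_at_topological using U \<open>y1 \<in> U\<close> nn u0 by auto
  then have Du0: "(\<lambda>h. Du y1 \<bullet> h) = (\<lambda>h. 0)"
    using has_derivative_local_min du \<open>y1 \<in> U\<close> by blast
  \<comment> \<open>Since \<open>\<nabla>u(y1) = 0\<close>, the barrier difference \<open>w\<close> decreases strictly from its zero at \<open>y1\<close>
    into the annulus, where it is non-negative.\<close>
  define v where "v = x1 - y1"
  have "norm v = d" using y1 by (simp add: v_def dist_norm)
  have "(w has_derivative (\<lambda>h. (Du y1 - m *\<^sub>R gauss_grad \<alpha> x1 y1) \<bullet> h)) (at (y1 + 0 *\<^sub>R v))"
    unfolding w_def[abs_def] using du \<open>y1 \<in> U\<close> by (simp add: has_derivative_minus_gauss_multiple)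
  from has_real_derivative_along_line[OF this]
  have deriv: "((\<lambda>t. w (y1 + t *\<^sub>R v)) has_real_derivative - m * (gauss_grad \<alpha> x1 y1 \<bullet> v)) (at 0)"
    using fun_cong[OF Du0, of v] by (simp add: inner_diff_left)
  have "gauss_grad \<alpha> x1 y1 \<bullet> v = 2 * \<alpha> * gauss \<alpha> x1 y1 * (v \<bullet> v)"
    by (simp add: gauss_grad_def v_def inner_diff_left inner_diff_right inner_commute algebra_simps)
  moreover have "v \<bullet> v = d\<^sup>2"
    using \<open>norm v = d\<close> by (simp flip: power2_norm_eq_inner)
  ultimately have "- m * (gauss_grad \<alpha> x1 y1 \<bullet> v) < 0"
    using \<open>0 < m\<close> \<open>1 \<le> \<alpha>\<close> d(1) gauss_pos[of \<alpha> x1 y1] by simp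
  moreover have "0 \<le> - m * (gauss_grad \<alpha> x1 y1 \<bullet> v)"
  proof (rule derivative_nonneg_at_right_min[OF deriv, of "1 / 2"])
    fix t :: real assume t: "0 < t" "t \<le> 1 / 2"
    have "x1 - (y1 + t *\<^sub>R v) = (1 - t) *\<^sub>R v" by (simp add: v_def algebra_simps)
    then have "dist x1 (y1 + t *\<^sub>R v) = (1 - t) * d" using \<open>norm v = d\<close> t by (simp add: dist_norm)
    then have "y1 + t *\<^sub>R v \<in> cball x1 d - ball x1 (d / 2)"
      using t d(1) mult_pos_pos[of t d] mult_right_mono[of t "1 / 2" d] by auto
    with w_nonneg have "0 \<le> w (y1 + t *\<^sub>R v)" by blast
    moreover have "w y1 = 0" using u0 y1 by (simp add: w_def gauss_eq_exp_dist)
    ultimately show "w (y1 + 0 *\<^sub>R v) \<le> w (y1 + t *\<^sub>R v)" by simp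
  qed simp
  ultimately show False by simp
qed

lemma exists_zero_approached_by_nonzeros:
  fixes u :: "'a::metric_space \<Rightarrow> real"
  assumes U: "connected U" and cont: "continuous_on U u"
    and zero: "\<exists>x\<in>U. u x = 0" and nonzero: "\<exists>x\<in>U. u x \<noteq> 0"
  obtains y where "y \<in> U" "u y = 0" "\<And>e. 0 < e \<Longrightarrow> \<exists>x\<in>U. dist x y < e \<and> u x \<noteq> 0"
proof -
  define Z where "Z = {x \<in> U. u x = 0}"
  have "closedin (top_of_set U) Z"
    unfolding Z_def by (rule continuous_closedin_preimage_constant[OF cont])
  moreover have "Z \<noteq> {}" using zero by (auto simp: Z_def)
  moreover have "Z \<noteq> U" using nonzero by (auto simp: Z_def)
  ultimately have "\<not> openin (top_of_set U) Z"
    using U unfolding connected_clopen by blast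
  then obtain y where y: "y \<in> Z" "\<And>e. 0 < e \<Longrightarrow> \<exists>x\<in>U. dist x y < e \<and> x \<notin> Z"
    unfolding openin_euclidean_subtopology_iff by (auto simp: Z_def)
  show thesis
  proof (rule that)
    show "y \<in> U" "u y = 0" using y(1) by (simp_all add: Z_def)
    show "\<exists>x\<in>U. dist x y < e \<and> u x \<noteq> 0" if "0 < e" for e
      using y(2)[OF that] by (auto simp: Z_def)
  qed
qed

lemma exists_interior_ball_at_zero:
  fixes u :: "'a::euclidean_space \<Rightarrow> real"
  assumes U: "open U" "connected U" and cont: "continuous_on U u" and nn: "\<forall>x\<in>U. 0 \<le> u x"
    and zero: "\<exists>x\<in>U. u x = 0" and pos: "\<exists>x\<in>U. 0 < u x"
  obtains x1 d y1 where "0 < d" "cball x1 d \<subseteq> U" "\<forall>y\<in>ball x1 d. 0 < u y" "dist x1 y1 = d" "u y1 = 0"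
proof -
  have "\<exists>x\<in>U. u x \<noteq> 0" using pos by force
  then obtain y where y: "y \<in> U" "u y = 0" "\<And>e. 0 < e \<Longrightarrow> \<exists>x\<in>U. dist x y < e \<and> u x \<noteq> 0"
    using exists_zero_approached_by_nonzeros[OF U(2) cont zero] by blast
  obtain r0 where r0: "0 < r0" "cball y r0 \<subseteq> U"
    using U(1) y(1) open_contains_cball by blast
  define r where "r = r0 / 2"
  have r: "0 < r" "cball y (2 * r) \<subseteq> U" using r0 by (auto simp: r_def)
  obtain x1 where x1: "dist x1 y < r" "u x1 \<noteq> 0" using y(3)[OF r(1)] by blast
  define Z' where "Z' = {x \<in> cball y (2 * r). u x = 0}"
  have "closed Z'" unfolding Z'_def
    by (rule continuous_closed_preimage_constant) (auto intro: continuous_on_subset[OF cont r(2)])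
  have "y \<in> Z'" using y(2) r(1) by (simp add: Z'_def)
  obtain y1 where y1: "y1 \<in> Z'" "\<And>z. z \<in> Z' \<Longrightarrow> dist x1 y1 \<le> dist x1 z"
    using distance_attains_inf[OF \<open>closed Z'\<close>, of x1] \<open>y \<in> Z'\<close> by blast
  define d where "d = dist x1 y1"
  have "d < r" using y1(2)[OF \<open>y \<in> Z'\<close>] x1(1) by (simp add: d_def dist_commute)
  have "0 < d" using x1(2) y1(1) by (auto simp: d_def Z'_def)
  have cb: "cball x1 d \<subseteq> cball y (2 * r)"
  proof
    fix z assume "z \<in> cball x1 d"
    then have "dist x1 z \<le> d" by simp
    with x1(1) \<open>d < r\<close> dist_triangle[of y z x1] show "z \<in> cball y (2 * r)"
      by (simp add: dist_commute)
  qed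
  show thesis
  proof
    show "0 < d" "dist x1 y1 = d" by (fact \<open>0 < d\<close>) (simp add: d_def)
    show "cball x1 d \<subseteq> U" using cb r(2) by blast
    show "u y1 = 0" using y1(1) by (simp add: Z'_def)
    show "\<forall>z\<in>ball x1 d. 0 < u z"
    proof
      fix z assume z: "z \<in> ball x1 d"
      then have "z \<in> cball y (2 * r)" using cb ball_subset_cball[of x1 d] by blast
      moreover have "\<not> dist x1 y1 \<le> dist x1 z" using z by (simp add: d_def)
      then have "z \<notin> Z'" using y1(2) by blast
      ultimately have "u z \<noteq> 0" by (simp add: Z'_def)
      moreover have "0 \<le> u z" using nn r(2) \<open>z \<in> cball y (2 * r)\<close> by blast
      ultimately show "0 < u z" by simp
    qed
  qed
qed

lemma strong_maximum_principle:
  fixes u :: "'a::euclidean_space \<Rightarrow> real"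
  assumes U: "open U" "connected U" and cont: "continuous_on U u" and nn: "\<forall>x\<in>U. 0 \<le> u x"
    and C: "0 \<le> C"
    and du: "\<forall>x\<in>U. (u has_derivative (\<lambda>h. Du x \<bullet> h)) (at x)"
    and d2u: "\<forall>x\<in>U. (Du has_derivative D2u x) (at x)"
    and pde: "\<forall>x\<in>U. - C * u x \<le> - trace_op (D2u x)"
    and pos: "\<exists>x\<in>U. 0 < u x"
  shows "\<forall>x\<in>U. 0 < u x"
proof (rule ccontr)
  assume "\<not> (\<forall>x\<in>U. 0 < u x)"
  then obtain x0 where x0: "x0 \<in> U" "\<not> 0 < u x0" by blast
  have "0 \<le> u x0" using nn x0(1) by blast
  with x0(2) have "\<exists>x\<in>U. u x = 0" using x0(1) by force
  from exists_interior_ball_at_zero[OF U cont nn this pos]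
  obtain x1 d y1 where ball: "0 < d" "cball x1 d \<subseteq> U" "\<forall>y\<in>ball x1 d. 0 < u y"
      and y1: "dist x1 y1 = d" "u y1 = 0" .
  from hopf_lemma_ball[OF U(1) cont nn C du d2u pde ball y1(1)] y1(2) show False by simp
qed

lemma exists_touching_multiple:
  fixes u v :: "'a::topological_space \<Rightarrow> real"
  assumes K: "compact K" "continuous_on K u" "continuous_on K v" and pos: "\<forall>y\<in>K. 0 < u y"
    and "z \<in> K" "0 < v z"
  obtains t x where "0 < t" "x \<in> K" "0 < v x" "u x = t * v x" "\<forall>y\<in>K. t * v y \<le> u y"
proof -
  have "continuous_on K (\<lambda>y. v y / u y)"
    using K(2,3) pos by (intro continuous_on_divide) auto
  then obtain x where x: "x \<in> K" "\<And>y. y \<in> K \<Longrightarrow> v y / u y \<le> v x / u x"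
    using continuous_attains_sup[OF K(1)] \<open>z \<in> K\<close> by blast
  define M where "M = v x / u x"
  have "0 < v z / u z" using \<open>0 < v z\<close> \<open>z \<in> K\<close> pos by simp
  then have "0 < M" using x(2)[OF \<open>z \<in> K\<close>] by (simp add: M_def)
  have "0 < u x" using pos x(1) by blast
  then have "v x = M * u x" unfolding M_def by simp
  with \<open>0 < M\<close> \<open>0 < u x\<close> have "0 < v x" by simp
  show thesis
  proof
    show "0 < 1 / M" "x \<in> K" "0 < v x" using \<open>0 < M\<close> x(1) \<open>0 < v x\<close> by auto
    show "u x = 1 / M * v x" using \<open>v x = M * u x\<close> \<open>0 < M\<close> by simp
    show "\<forall>y\<in>K. 1 / M * v y \<le> u y"
    proof
      fix y assume "y \<in> K"
      then have "v y \<le> M * u y" using x(2) pos by (simp add: M_def pos_divide_le_eq)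
      then show "1 / M * v y \<le> u y" using \<open>0 < M\<close> by (simp add: pos_divide_le_eq mult.commute)
    qed
  qed
qed

lemma positive_supersolution_ball_bound:
  fixes u :: "'a::euclidean_space \<Rightarrow> real" and \<Lambda> \<rho> :: real
  assumes \<rho>: "0 < \<rho>"
    and cont: "continuous_on (cball c \<rho>) u" and pos: "\<forall>x\<in>cball c \<rho>. 0 < u x"
    and du: "\<forall>x\<in>ball c \<rho>. (u has_derivative (\<lambda>h. Du x \<bullet> h)) (at x)"
    and d2u: "\<forall>x\<in>ball c \<rho>. (Du has_derivative D2u x) (at x)"
    and pde: "\<forall>x\<in>ball c \<rho>. \<Lambda> * u x \<le> - trace_op (D2u x)"
  shows "\<Lambda> < 8 * (real DIM('a))\<^sup>2 / \<rho>\<^sup>2"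
proof (rule ccontr)
  assume large: "\<not> ?thesis"
  define \<alpha> where "\<alpha> = DIM('a) / \<rho>\<^sup>2"
  have \<alpha>: "\<alpha> * \<rho>\<^sup>2 = DIM('a)" using \<rho> by (simp add: \<alpha>_def)
  have \<Lambda>: "8 * \<alpha> * DIM('a) \<le> \<Lambda>"
    using large \<rho> by (simp add: \<alpha>_def power2_eq_square field_simps)
  define c0 where "c0 = exp (- \<alpha> * \<rho>\<^sup>2)"
  define v where "v x = gauss \<alpha> c x - c0" for x
  have "0 < v c"
    using \<alpha> DIM_positive[where 'a='a] by (simp add: v_def c0_def gauss_def)
  moreover have "continuous_on (cball c \<rho>) v"
    unfolding v_def by (intro continuous_intros continuous_on_gauss)
  ultimately obtain t xs where touch: "0 < t" "xs \<in> cball c \<rho>" "0 < v xs" "u xs = t * v xs"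
      "\<forall>y\<in>cball c \<rho>. t * v y \<le> u y"
    using exists_touching_multiple[OF compact_cball cont _ pos, where z = c] \<rho> by auto
  have "dist c xs \<noteq> \<rho>"
    using touch(3) by (auto simp: v_def c0_def gauss_eq_exp_dist)
  with touch(2) have "xs \<in> ball c \<rho>" by simp
  have "0 \<le> trace_op (\<lambda>h. D2u xs h - t *\<^sub>R gauss_hess \<alpha> c xs h)"
  proof (rule trace_nonneg_at_local_min[OF open_ball \<open>xs \<in> ball c \<rho>\<close>, of "\<lambda>x. u x - t * v x"])
    show "u xs - t * v xs \<le> u y - t * v y" if "y \<in> ball c \<rho>" for y
      using touch(4,5) that by auto
    show "((\<lambda>x. u x - t * v x) has_derivative (\<lambda>h. (Du y - t *\<^sub>R gauss_grad \<alpha> c y) \<bullet> h)) (at y)"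
      if "y \<in> ball c \<rho>" for y
      unfolding v_def using du that by (simp add: has_derivative_minus_gauss_multiple)
    show "((\<lambda>y. Du y - t *\<^sub>R gauss_grad \<alpha> c y) has_derivative
            (\<lambda>h. D2u xs h - t *\<^sub>R gauss_hess \<alpha> c xs h)) (at xs)"
      using d2u \<open>xs \<in> ball c \<rho>\<close> by (simp add: has_derivative_minus_gauss_grad_multiple)
  qed
  then have "- trace_op (D2u xs) \<le> t * (- trace_op (gauss_hess \<alpha> c xs))"
    by (simp add: inner_diff_left sum_subtractf sum_distrib_left)
  also have "\<dots> < t * (\<Lambda> * v xs)"
  proof (rule mult_strict_left_mono[OF _ touch(1)])
    show "- trace_op (gauss_hess \<alpha> c xs) < \<Lambda> * v xs"
      using gauss_bump_strict_supersolution[OF \<alpha> \<Lambda>] touch(3) by (simp add: v_def c0_def)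
  qed
  also have "\<dots> = \<Lambda> * u xs" using touch(4) by simp
  finally have "- trace_op (D2u xs) < \<Lambda> * u xs" .
  moreover have "\<Lambda> * u xs \<le> - trace_op (D2u xs)" using pde \<open>xs \<in> ball c \<rho>\<close> by blast
  ultimately show False by simp
qed

section \<open>The concave-convex nonlinearity\<close>

lemma concave_convex_term_ge_neg_linear:
  fixes s M ax bx A B lam \<epsilon> p q :: real
  assumes s: "0 \<le> s" "s \<le> M" and ab: "\<bar>bx\<bar> \<le> B" "\<bar>ax\<bar> \<le> A"
    and \<epsilon>: "0 < \<epsilon>" and lam: "0 \<le> lam" and q: "q < 2" and p: "2 < p"
  shows "- ((lam * (B + \<epsilon>) * \<epsilon> powr (q - 2) + A * M powr (p - 2)) * s)
     \<le> lam * (bx - \<epsilon>) * \<bar>s + \<epsilon>\<bar> powr (q - 2) * s + ax * \<bar>s\<bar> powr (p - 2) * s"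
proof -
  define P where "P = \<bar>s + \<epsilon>\<bar> powr (q - 2)"
  define Q where "Q = \<bar>s\<bar> powr (p - 2)"
  have P: "0 \<le> P" "P \<le> \<epsilon> powr (q - 2)"
    unfolding P_def using s \<epsilon> q by (auto intro!: powr_mono2')
  have Q: "0 \<le> Q" "Q \<le> M powr (p - 2)"
    unfolding Q_def using s p by (auto intro!: powr_mono2)
  have "\<bar>lam * (bx - \<epsilon>)\<bar> \<le> lam * (B + \<epsilon>)"
    using ab lam \<epsilon> by (simp add: abs_mult mult_left_mono)
  then have "\<bar>lam * (bx - \<epsilon>)\<bar> * P * s \<le> lam * (B + \<epsilon>) * \<epsilon> powr (q - 2) * s"
    using P s lam \<epsilon> by (intro mult_right_mono mult_mono) auto
  moreover have "\<bar>ax\<bar> * Q * s \<le> A * M powr (p - 2) * s"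
    using Q s ab by (intro mult_right_mono mult_mono) auto
  ultimately have "\<bar>lam * (bx - \<epsilon>) * P * s\<bar> \<le> lam * (B + \<epsilon>) * \<epsilon> powr (q - 2) * s"
      "\<bar>ax * Q * s\<bar> \<le> A * M powr (p - 2) * s"
    using P(1) Q(1) s(1) by (simp_all add: abs_mult)
  then have "- (lam * (B + \<epsilon>) * \<epsilon> powr (q - 2) * s) \<le> lam * (bx - \<epsilon>) * P * s"
      "- (A * M powr (p - 2) * s) \<le> ax * Q * s"
    using abs_ge_minus_self[of "lam * (bx - \<epsilon>) * P * s"] abs_ge_minus_self[of "ax * Q * s"] by linarith+
  then show ?thesis unfolding P_def[symmetric] Q_def[symmetric] distrib_right by linarith
qed

lemma concave_convex_term_ge_linear:
  fixes s s0 ax bx lam \<epsilon> p q \<Lambda> :: real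
  assumes s: "0 < s" and s0: "0 < s0" and \<epsilon>: "0 < \<epsilon>" "\<epsilon> \<le> 1" and q: "q < 2" and p: "2 < p"
    and ax: "\<Lambda> \<le> ax * s0 powr (p - 2)" "0 \<le> ax"
    and bx: "\<Lambda> \<le> lam * (bx - \<epsilon>) * (s0 + 1) powr (q - 2)" "0 \<le> lam * (bx - \<epsilon>)"
  shows "\<Lambda> * s \<le> lam * (bx - \<epsilon>) * \<bar>s + \<epsilon>\<bar> powr (q - 2) * s + ax * \<bar>s\<bar> powr (p - 2) * s"
proof -
  have concave_nonneg: "0 \<le> lam * (bx - \<epsilon>) * \<bar>s + \<epsilon>\<bar> powr (q - 2) * s" using bx(2) s by simp
  have convex_nonneg: "0 \<le> ax * \<bar>s\<bar> powr (p - 2) * s" using ax(2) s by simp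
  show ?thesis
  proof (cases "s0 \<le> s")
    case True
    then have "s0 powr (p - 2) \<le> \<bar>s\<bar> powr (p - 2)" using s0 p by (auto intro!: powr_mono2)
    then have "\<Lambda> \<le> ax * \<bar>s\<bar> powr (p - 2)" using ax by (meson mult_left_mono order_trans)
    then have "\<Lambda> * s \<le> ax * \<bar>s\<bar> powr (p - 2) * s" using s by (simp add: mult_right_mono)
    with concave_nonneg show ?thesis by linarith
  next
    case False
    then have "(s0 + 1) powr (q - 2) \<le> \<bar>s + \<epsilon>\<bar> powr (q - 2)" using s \<epsilon> q by (auto intro!: powr_mono2')
    then have "\<Lambda> \<le> lam * (bx - \<epsilon>) * \<bar>s + \<epsilon>\<bar> powr (q - 2)" using bx by (meson mult_left_mono order_trans)
    then have "\<Lambda> * s \<le> lam * (bx - \<epsilon>) * \<bar>s + \<epsilon>\<bar> powr (q - 2) * s" using s by (simp add: mult_right_mono)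
    with convex_nonneg show ?thesis by linarith
  qed
qed

lemma concave_convex_term_eventually_ge_linear:
  fixes \<delta> \<beta> \<Lambda> p q :: real
  assumes \<delta>: "0 < \<delta>" and \<beta>: "0 < \<beta>" and \<Lambda>: "0 < \<Lambda>" and q: "q < 2" and p: "2 < p"
  obtains lam0 where "0 < lam0"
    "\<And>lam \<epsilon> s ax bx :: real. lam0 \<le> lam \<Longrightarrow> 0 < \<epsilon> \<Longrightarrow> \<epsilon> \<le> 1 \<Longrightarrow> 0 < s \<Longrightarrow> \<delta> \<le> ax \<Longrightarrow> \<beta> \<le> bx - \<epsilon> \<Longrightarrow>
       \<Lambda> * s \<le> lam * (bx - \<epsilon>) * \<bar>s + \<epsilon>\<bar> powr (q - 2) * s + ax * \<bar>s\<bar> powr (p - 2) * s"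
proof -
  \<comment> \<open>Above \<open>s0\<close> the convex term alone exceeds \<open>\<Lambda> s\<close>; below it \<open>lam0\<close> makes the concave one do so.\<close>
  define s0 where "s0 = (\<Lambda> / \<delta>) powr (1 / (p - 2))"
  have "0 < s0" using \<Lambda> \<delta> by (simp add: s0_def)
  have s0_pow: "\<delta> * s0 powr (p - 2) = \<Lambda>" using \<Lambda> \<delta> p by (simp add: s0_def powr_powr)
  define lam0 where "lam0 = \<Lambda> / (\<beta> * (s0 + 1) powr (q - 2))"
  have "0 < (s0 + 1) powr (q - 2)" using \<open>0 < s0\<close> by simp
  have lam0_pos: "0 < lam0" using \<Lambda> \<beta> \<open>0 < (s0 + 1) powr (q - 2)\<close> by (simp add: lam0_def)
  show thesis
  proof (rule that[OF lam0_pos])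
    fix lam \<epsilon> s ax bx :: real
    assume lam: "lam0 \<le> lam" and \<epsilon>: "0 < \<epsilon>" "\<epsilon> \<le> 1" and "0 < s" and ax: "\<delta> \<le> ax" and bx: "\<beta> \<le> bx - \<epsilon>"
    have "lam0 * \<beta> \<le> lam * (bx - \<epsilon>)"
      using lam bx \<beta> lam0_pos by (intro mult_mono) auto
    then have "\<Lambda> \<le> lam * (bx - \<epsilon>) * (s0 + 1) powr (q - 2)"
      using \<beta> \<open>0 < (s0 + 1) powr (q - 2)\<close> mult_right_mono[of "lam0 * \<beta>" "lam * (bx - \<epsilon>)" "(s0 + 1) powr (q - 2)"]
      by (simp add: lam0_def)
    moreover have "\<Lambda> \<le> ax * s0 powr (p - 2)"
      using s0_pow ax mult_right_mono[of \<delta> ax "s0 powr (p - 2)"] by simp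
    ultimately show "\<Lambda> * s \<le> lam * (bx - \<epsilon>) * \<bar>s + \<epsilon>\<bar> powr (q - 2) * s + ax * \<bar>s\<bar> powr (p - 2) * s"
      using concave_convex_term_ge_linear[OF \<open>0 < s\<close> \<open>0 < s0\<close> \<epsilon> q p] ax \<delta>
        \<open>lam0 * \<beta> \<le> lam * (bx - \<epsilon>)\<close> lam0_pos \<beta> by (smt (verit) mult_pos_pos)
  qed
qed

section \<open>Non-negative solutions of the Neumann problem\<close>

lemma holder_continuous_on_imp_continuous_on:
  assumes holder: "holder_continuous_on \<alpha> S f" and \<alpha>: "0 < \<alpha>"
  shows "continuous_on S f"
  unfolding continuous_on_iff
proof (intro ballI allI impI)
  fix x e assume x: "x \<in> S" and e: "(0::real) < e"
  obtain C where C: "\<forall>x\<in>S. \<forall>y\<in>S. \<bar>f x - f y\<bar> \<le> C * dist x y powr \<alpha>"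
    using holder by (auto simp: holder_continuous_on_def)
  define C' where "C' = max C 1"
  have C': "0 < C'" "C \<le> C'" by (auto simp: C'_def)
  define d where "d = (e / C') powr (1 / \<alpha>)"
  show "\<exists>d>0. \<forall>x'\<in>S. dist x' x < d \<longrightarrow> dist (f x') (f x) < e"
  proof (intro exI conjI ballI impI)
    show "0 < d" using e C' by (simp add: d_def)
    fix y assume y: "y \<in> S" "dist y x < d"
    have "dist y x powr \<alpha> < d powr \<alpha>" using y \<alpha> by (intro powr_less_mono2) auto
    also have "\<dots> = e / C'" using e C' \<alpha> by (simp add: d_def powr_powr)
    finally have lt: "dist y x powr \<alpha> < e / C'" .
    have "\<bar>f y - f x\<bar> \<le> C' * dist y x powr \<alpha>"
      using C y x C' by (meson mult_right_mono order_trans powr_ge_zero)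
    also have "\<dots> < e" using mult_strict_left_mono[OF lt C'(1)] C' by simp
    finally show "dist (f y) (f x) < e" by (simp add: dist_real_def)
  qed
qed

lemma ball_with_positive_lower_bounds:
  fixes a b :: "'a::metric_space \<Rightarrow> real"
  assumes T: "open T" "T \<subseteq> S" "x \<in> T" and cont: "continuous_on S a" "continuous_on S b"
    and pos: "0 < a x" "0 < b x"
  obtains \<rho> where "0 < \<rho>" "cball x \<rho> \<subseteq> T" "\<forall>y\<in>cball x \<rho>. a x / 2 \<le> a y \<and> b x / 2 \<le> b y"
proof -
  have "x \<in> S" using T by blast
  obtain da where da: "0 < da" "\<And>y. y \<in> S \<Longrightarrow> dist y x < da \<Longrightarrow> dist (a y) (a x) < a x / 2"
    using cont(1) \<open>x \<in> S\<close> pos(1) unfolding continuous_on_iff by (meson half_gt_zero)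
  obtain db where db: "0 < db" "\<And>y. y \<in> S \<Longrightarrow> dist y x < db \<Longrightarrow> dist (b y) (b x) < b x / 2"
    using cont(2) \<open>x \<in> S\<close> pos(2) unfolding continuous_on_iff by (meson half_gt_zero)
  obtain eo where eo: "0 < eo" "cball x eo \<subseteq> T" using T(1,3) open_contains_cball by blast
  define \<rho> where "\<rho> = min (min da db) eo / 2"
  show thesis
  proof (rule that[of \<rho>])
    show "0 < \<rho>" using da db eo by (simp add: \<rho>_def)
    show sub: "cball x \<rho> \<subseteq> T" using eo by (force simp: \<rho>_def)
    show "\<forall>y\<in>cball x \<rho>. a x / 2 \<le> a y \<and> b x / 2 \<le> b y"
    proof
      fix y assume "y \<in> cball x \<rho>"
      then have "y \<in> S" "dist y x < da" "dist y x < db"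
        using sub T(2) da(1) db(1) by (auto simp: \<rho>_def dist_commute)
      with da(2) db(2) have "dist (a y) (a x) < a x / 2" "dist (b y) (b x) < b x / 2" by auto
      then show "a x / 2 \<le> a y \<and> b x / 2 \<le> b y" unfolding dist_real_def
        using abs_ge_minus_self[of "a y - a x"] abs_ge_minus_self[of "b y - b x"] by linarith
    qed
  qed
qed

lemma neumann_solution_positive:
  fixes u :: "'a::euclidean_space \<Rightarrow> real"
  assumes \<Omega>: "open \<Omega>" "connected \<Omega>" and sol: "neumann_classical_solution \<Omega> F u"
    and nn: "\<forall>x\<in>closure \<Omega>. 0 \<le> u x" and nz: "\<exists>x\<in>closure \<Omega>. u x \<noteq> 0"
    and C: "0 \<le> C" "\<forall>x\<in>\<Omega>. - C * u x \<le> F x (u x)"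
  shows "\<forall>x\<in>\<Omega>. 0 < u x"
proof -
  obtain Du D2u where cont: "continuous_on (closure \<Omega>) u"
    and du: "\<forall>x\<in>\<Omega>. (u has_derivative (\<lambda>h. Du x \<bullet> h)) (at x)"
    and d2u: "\<forall>x\<in>\<Omega>. (Du has_derivative D2u x) (at x)"
    and eq: "\<forall>x\<in>\<Omega>. - trace_op (D2u x) = F x (u x)"
    using sol unfolding neumann_classical_solution_def by blast
  have "\<exists>x\<in>\<Omega>. 0 < u x"
  proof (rule ccontr)
    assume "\<not> (\<exists>x\<in>\<Omega>. 0 < u x)"
    then have "\<forall>x\<in>\<Omega>. u x = 0" using nn closure_subset by force
    then have "\<forall>x\<in>closure \<Omega>. u x = 0" using continuous_constant_on_closure[OF cont] by blast
    with nz show False by blast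
  qed
  moreover have "\<forall>x\<in>\<Omega>. - C * u x \<le> - trace_op (D2u x)" using C(2) eq by simp
  moreover have "\<forall>x\<in>\<Omega>. 0 \<le> u x" using nn closure_subset by blast
  ultimately show ?thesis
    using strong_maximum_principle[OF \<Omega> continuous_on_subset[OF cont closure_subset] _ C(1) du d2u]
    by blast
qed

lemma neumann_solution_supersolution_bound:
  fixes u :: "'a::euclidean_space \<Rightarrow> real"
  assumes sol: "neumann_classical_solution \<Omega> F u" and \<rho>: "0 < \<rho>" "cball c \<rho> \<subseteq> \<Omega>"
    and pos: "\<forall>x\<in>cball c \<rho>. 0 < u x" and super: "\<forall>x\<in>ball c \<rho>. \<Lambda> * u x \<le> F x (u x)"
  shows "\<Lambda> < 8 * (real DIM('a))\<^sup>2 / \<rho>\<^sup>2"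
proof -
  obtain Du D2u where cont: "continuous_on (closure \<Omega>) u"
    and du: "\<forall>x\<in>\<Omega>. (u has_derivative (\<lambda>h. Du x \<bullet> h)) (at x)"
    and d2u: "\<forall>x\<in>\<Omega>. (Du has_derivative D2u x) (at x)"
    and eq: "\<forall>x\<in>\<Omega>. - trace_op (D2u x) = F x (u x)"
    using sol unfolding neumann_classical_solution_def by blast
  have "cball c \<rho> \<subseteq> closure \<Omega>" using \<rho>(2) closure_subset by blast
  have "ball c \<rho> \<subseteq> \<Omega>" using \<rho>(2) by auto
  show ?thesis
  proof (rule positive_supersolution_ball_bound[OF \<rho>(1) continuous_on_subset[OF cont \<open>cball c \<rho> \<subseteq> closure \<Omega>\<close>] pos])
    show "\<forall>x\<in>ball c \<rho>. (u has_derivative (\<lambda>h. Du x \<bullet> h)) (at x)" using du \<open>ball c \<rho> \<subseteq> \<Omega>\<close> by blast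
    show "\<forall>x\<in>ball c \<rho>. (Du has_derivative D2u x) (at x)" using d2u \<open>ball c \<rho> \<subseteq> \<Omega>\<close> by blast
    show "\<forall>x\<in>ball c \<rho>. \<Lambda> * u x \<le> - trace_op (D2u x)" using super eq \<open>ball c \<rho> \<subseteq> \<Omega>\<close> by auto
  qed
qed

lemma concave_convex_solution_positive:
  fixes u a b :: "'a::euclidean_space \<Rightarrow> real"
  assumes \<Omega>: "open \<Omega>" "connected \<Omega>" "bounded \<Omega>"
    and ab: "continuous_on (closure \<Omega>) a" "continuous_on (closure \<Omega>) b"
    and sol: "neumann_classical_solution \<Omega>
                (\<lambda>x s. lam * (b x - \<epsilon>) * \<bar>s + \<epsilon>\<bar> powr (q - 2) * s + a x * \<bar>s\<bar> powr (p - 2) * s) u"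
    and nn: "\<forall>x\<in>closure \<Omega>. 0 \<le> u x" and nz: "\<exists>x\<in>closure \<Omega>. u x \<noteq> 0"
    and lam: "0 \<le> lam" and \<epsilon>: "0 < \<epsilon>" and q: "q < 2" and p: "2 < p"
  shows "\<forall>x\<in>\<Omega>. 0 < u x"
proof -
  have "compact (closure \<Omega>)" using \<Omega>(3) by simp
  moreover have "continuous_on (closure \<Omega>) u"
    using sol by (simp add: neumann_classical_solution_def)
  ultimately obtain A B M where A: "\<And>x. x \<in> closure \<Omega> \<Longrightarrow> \<bar>a x\<bar> \<le> A"
    and B: "\<And>x. x \<in> closure \<Omega> \<Longrightarrow> \<bar>b x\<bar> \<le> B" and M: "\<And>x. x \<in> closure \<Omega> \<Longrightarrow> \<bar>u x\<bar> \<le> M"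
    using continuous_on_compact_bound ab by (metis real_norm_def)
  define C where "C = lam * (B + \<epsilon>) * \<epsilon> powr (q - 2) + A * M powr (p - 2)"
  have "0 \<le> A" "0 \<le> B" using A B nz by (meson abs_ge_zero order_trans)+
  then have "0 \<le> C" using lam \<epsilon> by (simp add: C_def)
  have "- C * u x \<le> lam * (b x - \<epsilon>) * \<bar>u x + \<epsilon>\<bar> powr (q - 2) * u x + a x * \<bar>u x\<bar> powr (p - 2) * u x"
    if "x \<in> \<Omega>" for x
  proof -
    have "x \<in> closure \<Omega>" using that closure_subset by blast
    then show ?thesis
      unfolding C_def minus_mult_left[symmetric]
      by (intro concave_convex_term_ge_neg_linear) (use nn M B A \<epsilon> lam q p in auto)
  qed
  then show ?thesis
    using neumann_solution_positive[OF \<Omega>(1,2) sol nn nz \<open>0 \<le> C\<close>] by blast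
qed

lemma concave_convex_term_large_on_ball:
  fixes a b :: "'a::euclidean_space \<Rightarrow> real"
  assumes \<Omega>: "open \<Omega>" and ab: "continuous_on (closure \<Omega>) a" "continuous_on (closure \<Omega>) b"
    and xa: "xa \<in> \<Omega>" "0 < a xa" "0 < b xa" and q: "q < 2" and p: "2 < p"
  obtains \<rho> lam0 \<epsilon>0 where "0 < \<rho>" "cball xa \<rho> \<subseteq> \<Omega>" "0 < lam0" "0 < \<epsilon>0"
    "\<And>lam \<epsilon> x s. lam0 \<le> lam \<Longrightarrow> 0 < \<epsilon> \<Longrightarrow> \<epsilon> \<le> \<epsilon>0 \<Longrightarrow> x \<in> cball xa \<rho> \<Longrightarrow> 0 < s \<Longrightarrow>
       8 * (real DIM('a))\<^sup>2 / \<rho>\<^sup>2 * s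
         \<le> lam * (b x - \<epsilon>) * \<bar>s + \<epsilon>\<bar> powr (q - 2) * s + a x * \<bar>s\<bar> powr (p - 2) * s"
proof -
  obtain \<rho> where \<rho>: "0 < \<rho>" "cball xa \<rho> \<subseteq> \<Omega>" "\<forall>y\<in>cball xa \<rho>. a xa / 2 \<le> a y \<and> b xa / 2 \<le> b y"
    using ball_with_positive_lower_bounds[OF \<Omega> closure_subset xa(1) ab xa(2,3)] by blast
  define \<Lambda> where "\<Lambda> = 8 * (real DIM('a))\<^sup>2 / \<rho>\<^sup>2"
  obtain lam0 where lam0: "0 < lam0"
    "\<And>lam \<epsilon> s ax bx :: real. lam0 \<le> lam \<Longrightarrow> 0 < \<epsilon> \<Longrightarrow> \<epsilon> \<le> 1 \<Longrightarrow> 0 < s \<Longrightarrow> a xa / 2 \<le> ax \<Longrightarrow> b xa / 4 \<le> bx - \<epsilon> \<Longrightarrow>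
       \<Lambda> * s \<le> lam * (bx - \<epsilon>) * \<bar>s + \<epsilon>\<bar> powr (q - 2) * s + ax * \<bar>s\<bar> powr (p - 2) * s"
    using concave_convex_term_eventually_ge_linear[of "a xa / 2" "b xa / 4" \<Lambda> q p] xa \<rho>(1) q p
    by (auto simp: \<Lambda>_def)
  show thesis
  proof (rule that[OF \<rho>(1,2) lam0(1)])
    show "0 < min (b xa / 4) 1" using xa(3) by simp
    fix lam \<epsilon> s :: real and x
    assume "lam0 \<le> lam" "0 < \<epsilon>" "\<epsilon> \<le> min (b xa / 4) 1" "x \<in> cball xa \<rho>" "0 < s"
    moreover from \<rho>(3) \<open>x \<in> cball xa \<rho>\<close> have "a xa / 2 \<le> a x" "b xa / 2 \<le> b x" by auto
    ultimately show "8 * (real DIM('a))\<^sup>2 / \<rho>\<^sup>2 * s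
         \<le> lam * (b x - \<epsilon>) * \<bar>s + \<epsilon>\<bar> powr (q - 2) * s + a x * \<bar>s\<bar> powr (p - 2) * s"
      unfolding \<Lambda>_def[symmetric] by (intro lam0(2)) auto
  qed
qed

lemma concave_convex_no_nonneg_solution:
  fixes u a b :: "'a::euclidean_space \<Rightarrow> real"
  assumes \<Omega>: "open \<Omega>" "connected \<Omega>" "bounded \<Omega>"
    and ab: "continuous_on (closure \<Omega>) a" "continuous_on (closure \<Omega>) b"
    and \<rho>: "0 < \<rho>" "cball c \<rho> \<subseteq> \<Omega>"
    and large: "\<And>x s. x \<in> cball c \<rho> \<Longrightarrow> 0 < s \<Longrightarrow> 8 * (real DIM('a))\<^sup>2 / \<rho>\<^sup>2 * s
                  \<le> lam * (b x - \<epsilon>) * \<bar>s + \<epsilon>\<bar> powr (q - 2) * s + a x * \<bar>s\<bar> powr (p - 2) * s"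
    and lam: "0 \<le> lam" and \<epsilon>: "0 < \<epsilon>" and q: "q < 2" and p: "2 < p"
    and sol: "neumann_classical_solution \<Omega>
                (\<lambda>x s. lam * (b x - \<epsilon>) * \<bar>s + \<epsilon>\<bar> powr (q - 2) * s + a x * \<bar>s\<bar> powr (p - 2) * s) u"
    and nn: "\<forall>x\<in>closure \<Omega>. 0 \<le> u x" and nz: "\<exists>x\<in>closure \<Omega>. u x \<noteq> 0"
  shows False
proof -
  have "\<forall>x\<in>\<Omega>. 0 < u x"
    using concave_convex_solution_positive[OF \<Omega> ab sol nn nz lam \<epsilon> q p] .
  then have pos: "\<forall>x\<in>cball c \<rho>. 0 < u x" using \<rho>(2) by blast
  have "8 * (real DIM('a))\<^sup>2 / \<rho>\<^sup>2 < 8 * (real DIM('a))\<^sup>2 / \<rho>\<^sup>2"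
  proof (rule neumann_solution_supersolution_bound[OF sol \<rho> pos], intro ballI)
    fix x assume "x \<in> ball c \<rho>"
    then have "x \<in> cball c \<rho>" by simp
    with pos show "8 * (real DIM('a))\<^sup>2 / \<rho>\<^sup>2 * u x
        \<le> lam * (b x - \<epsilon>) * \<bar>u x + \<epsilon>\<bar> powr (q - 2) * u x + a x * \<bar>u x\<bar> powr (p - 2) * u x"
      by (intro large) auto
  qed
  then show False by simp
qed

theorem proposition6p1:
  fixes \<Omega> :: "'a::euclidean_space set"
    and a b :: "'a \<Rightarrow> real"
    and p q \<alpha> :: real
  assumes dim: "DIM('a) \<ge> 2"
    and dom: "bounded_smooth_domain \<Omega>"
    and qp: "1 < q" "q < 2" "2 < p"
    and alpha: "0 < \<alpha>" "\<alpha> < 1"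
    and holder: "holder_continuous_on \<alpha> (closure \<Omega>) a" "holder_continuous_on \<alpha> (closure \<Omega>) b"
    and ball: "\<exists>x0 r. 0 < r \<and> cball x0 r \<subseteq> \<Omega> \<and>
                 (\<forall>x\<in>cball x0 r. a x \<ge> 0 \<and> b x > 0) \<and> (\<exists>x\<in>cball x0 r. a x \<noteq> 0)"
  shows "\<exists>lam0>0. \<exists>\<epsilon>0>0. \<forall>lam\<ge>lam0. \<forall>\<epsilon>. 0 < \<epsilon> \<and> \<epsilon> \<le> \<epsilon>0 \<longrightarrow>
           \<not> (\<exists>u. neumann_classical_solution \<Omega>
                   (\<lambda>x s. lam * (b x - \<epsilon>) * \<bar>s + \<epsilon>\<bar> powr (q - 2) * s + a x * \<bar>s\<bar> powr (p - 2) * s) u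
                 \<and> (\<forall>x\<in>closure \<Omega>. u x \<ge> 0) \<and> (\<exists>x\<in>closure \<Omega>. u x \<noteq> 0))"
proof -
  have \<Omega>: "open \<Omega>" "connected \<Omega>" "bounded \<Omega>" using dom by (auto simp: bounded_smooth_domain_def)
  have ab: "continuous_on (closure \<Omega>) a" "continuous_on (closure \<Omega>) b"
    using holder alpha(1) by (auto intro: holder_continuous_on_imp_continuous_on)
  obtain xa where xa: "xa \<in> \<Omega>" "0 < a xa" "0 < b xa"
    using ball by (force simp: order.order_iff_strict)
  obtain \<rho> lam0 \<epsilon>0 where \<rho>: "0 < \<rho>" "cball xa \<rho> \<subseteq> \<Omega>" and "0 < lam0" "0 < \<epsilon>0"
    and large: "\<And>lam \<epsilon> x s. lam0 \<le> lam \<Longrightarrow> 0 < \<epsilon> \<Longrightarrow> \<epsilon> \<le> \<epsilon>0 \<Longrightarrow> x \<in> cball xa \<rho> \<Longrightarrow> 0 < s \<Longrightarrow>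
       8 * (real DIM('a))\<^sup>2 / \<rho>\<^sup>2 * s
         \<le> lam * (b x - \<epsilon>) * \<bar>s + \<epsilon>\<bar> powr (q - 2) * s + a x * \<bar>s\<bar> powr (p - 2) * s"
    using concave_convex_term_large_on_ball[OF \<Omega>(1) ab xa qp(2,3)] by blast
  show ?thesis
  proof (rule exI[of _ lam0], intro conjI \<open>0 < lam0\<close> exI[of _ \<epsilon>0] \<open>0 < \<epsilon>0\<close> allI impI notI,
      elim exE conjE)
    fix lam \<epsilon> u
    assume lam: "lam0 \<le> lam" and "0 < \<epsilon>" "\<epsilon> \<le> \<epsilon>0"
    then show "neumann_classical_solution \<Omega>
        (\<lambda>x s. lam * (b x - \<epsilon>) * \<bar>s + \<epsilon>\<bar> powr (q - 2) * s + a x * \<bar>s\<bar> powr (p - 2) * s) u \<Longrightarrow>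
      \<forall>x\<in>closure \<Omega>. 0 \<le> u x \<Longrightarrow> \<exists>x\<in>closure \<Omega>. u x \<noteq> 0 \<Longrightarrow> False"
      using concave_convex_no_nonneg_solution[OF \<Omega> ab \<rho> large[OF lam \<open>0 < \<epsilon>\<close> \<open>\<epsilon> \<le> \<epsilon>0\<close>]]
        \<open>0 < lam0\<close> qp(2,3) by simp
  qed
qed

end
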